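(* Let $\alpha>1$, $M>0$, $c_0>0$, $T>0$, and $c=\alpha^{-1/(\alpha-1)}$. Define for $0\le t<T$, $\rho\ge0$, $$\underline m(t,\rho)=\begin{cases}0,& \rho<c_0-\alpha^{1/\alpha}M(T-t)^{1/\alpha},\\ \Big(M^{\frac\alpha{\alpha-1}}-c\,\dfrac{(c_0-\rho)^{\frac\alpha{\alpha-1}}}{(T-t)^{\frac1{\alpha-1}}}\Big)^{\frac{\alpha-1}\alpha}, & c_0-\alpha^{1/\alpha}M(T-t)^{1/\alpha}\le\rho<c_0,\\ M,&\rho\ge c_0.\end{cases}$$ Then $\underline m$ is continuous and satisfies the viscosity subsolution inequality $p_1+(p_2)_+^\alpha\,\underline m(t,\rho)\le0$ for all $(t,\rho)\in(0,T)\times(0,\infty)$ and all $(p_1,p_2)\in D^+\underline m(t,\rho)$.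
   Context: Fréchet superdifferential: $D^+f(x)=\{p\in\mathbb R^n:\limsup_{y\to x}\frac{f(y)-f(x)-p\cdot(y-x)}{|y-x|}\le0\}$. The equation is the mass equation $m_t+m(m_\rho)_+^\alpha=0$ for radial solutions in a volume variable $\rho$. *)

theory Defs
  imports "HOL-Analysis.Analysis"
begin

definition frechet_superdiff :: "('a::real_inner \<Rightarrow> real) \<Rightarrow> 'a \<Rightarrow> 'a set" where
  "frechet_superdiff f x =
     {p. Limsup (at x) (\<lambda>y. ereal ((f y - f x - p \<bullet> (y - x)) / norm (y - x))) \<le> 0}"

definition mlow :: "real \<Rightarrow> real \<Rightarrow> real \<Rightarrow> real \<Rightarrow> real \<Rightarrow> real \<Rightarrow> real" where
  "mlow \<alpha> M c0 T t \<rho> =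
     (let c = \<alpha> powr (- 1 / (\<alpha> - 1)) in
      if \<rho> < c0 - \<alpha> powr (1 / \<alpha>) * M * (T - t) powr (1 / \<alpha>) then 0
      else if \<rho> < c0 then
        (M powr (\<alpha> / (\<alpha> - 1))
          - c * (c0 - \<rho>) powr (\<alpha> / (\<alpha> - 1)) / (T - t) powr (1 / (\<alpha> - 1)))
          powr ((\<alpha> - 1) / \<alpha>)
      else M)"

end

theory Submission
  imports Defs
begin

text \<open>Let \<open>\<beta> = \<alpha>/(\<alpha>-1)\<close> and let \<open>A(t) = \<alpha>^(1/\<alpha>) M (T-t)^(1/\<alpha>)\<close> be the width of the
  transition zone \<open>c0 - A(t) < \<rho> < c0\<close>. There \<open>m^\<beta> = M^\<beta> - c (c0-\<rho>)^\<beta> / (T-t)^(1/(\<alpha>-1))\<close>,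
  which is smooth and solves \<open>m_t + m (m_\<rho>)^\<alpha> = 0\<close> by a direct computation; the partial
  derivatives bound the components of any superdifferential. Outside the zone \<open>m\<close> is locally
  constant in time, so \<open>p1 \<le> 0\<close>; for \<open>\<rho> \<ge> c0\<close> also \<open>p2 \<le> 0\<close>, since \<open>m\<close> reaches \<open>M\<close> with a
  left difference quotient of order \<open>(c0-\<rho>)^(1/(\<alpha>-1))\<close>. At the free boundary
  \<open>\<rho> = c0 - A(t)\<close> the barrier grows like \<open>(\<rho> - c0 + A(t))^(1/\<beta>)\<close>, faster than linearly, so
  the superdifferential is empty there.\<close>

lemma Limsup_mono_filter:
  assumes "F \<le> G"
  shows "Limsup F f \<le> Limsup G (f :: _ \<Rightarrow> ereal)"
  unfolding Limsup_def by (rule INF_superset_mono) (auto intro: filter_leD[OF assms])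

lemma frechet_superdiff_Limsup_ray:
  fixes f :: "'a::real_inner \<Rightarrow> real"
  assumes p: "p \<in> frechet_superdiff f x" and v: "v \<noteq> 0"
  shows "Limsup (at_right 0)
           (\<lambda>s. ereal ((f (x + s *\<^sub>R v) - f x - p \<bullet> (s *\<^sub>R v)) / norm (s *\<^sub>R v))) \<le> 0"
proof -
  let ?q = "\<lambda>y. ereal ((f y - f x - p \<bullet> (y - x)) / norm (y - x))"
  have ray: "filterlim (\<lambda>s::real. x + s *\<^sub>R v) (at x) (at_right 0)"
  proof (rule filterlim_atI)
    have "((\<lambda>s::real. x + s *\<^sub>R v) \<longlongrightarrow> x + 0 *\<^sub>R v) (at_right 0)"
      by (intro tendsto_intros)
    then show "((\<lambda>s::real. x + s *\<^sub>R v) \<longlongrightarrow> x) (at_right 0)" by simp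
    show "\<forall>\<^sub>F s in at_right 0. x + s *\<^sub>R v \<noteq> x"
      using eventually_at_right_less[of 0] by eventually_elim (use v in simp)
  qed
  have "Limsup (at_right 0) (\<lambda>s. ?q (x + s *\<^sub>R v))
        \<le> Limsup (filtermap (\<lambda>s. x + s *\<^sub>R v) (at_right (0::real))) ?q"
    by (rule Limsup_filtermap_ge)
  also have "\<dots> \<le> Limsup (at x) ?q"
    using ray unfolding filterlim_def by (rule Limsup_mono_filter)
  also have "\<dots> \<le> 0"
    using p by (simp add: frechet_superdiff_def)
  finally show ?thesis by simp
qed

lemma frechet_superdiff_directional_le:
  fixes f :: "'a::real_inner \<Rightarrow> real"
  assumes p: "p \<in> frechet_superdiff f x" and v: "v \<noteq> 0"
    and L: "((\<lambda>s. (f (x + s *\<^sub>R v) - f x) / s) \<longlongrightarrow> L) (at_right 0)"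
  shows "L \<le> p \<bullet> v"
proof -
  let ?q = "\<lambda>s. (f (x + s *\<^sub>R v) - f x - p \<bullet> (s *\<^sub>R v)) / norm (s *\<^sub>R v)"
  have "((\<lambda>s. ((f (x + s *\<^sub>R v) - f x) / s - p \<bullet> v) / norm v)
          \<longlongrightarrow> (L - p \<bullet> v) / norm v) (at_right 0)"
    using v by (intro tendsto_intros L) auto
  moreover have "\<forall>\<^sub>F s in at_right 0. ((f (x + s *\<^sub>R v) - f x) / s - p \<bullet> v) / norm v = ?q s"
    using eventually_at_right_less[of 0]
    by eventually_elim (use v in \<open>simp add: divide_simps\<close>)
  ultimately have "(?q \<longlongrightarrow> (L - p \<bullet> v) / norm v) (at_right 0)"
    by (rule Lim_transform_eventually)
  then have "Limsup (at_right 0) (\<lambda>s. ereal (?q s)) = ereal ((L - p \<bullet> v) / norm v)"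
    by (intro lim_imp_Limsup tendsto_ereal) auto
  with frechet_superdiff_Limsup_ray[OF p v] have "(L - p \<bullet> v) / norm v \<le> 0" by simp
  with v show ?thesis by (simp add: divide_le_0_iff)
qed

lemma frechet_superdiff_empty_if_root_growth:
  fixes f :: "'a::real_inner \<Rightarrow> real"
  assumes v: "v \<noteq> 0" and "\<gamma> < 1" and k: "k > 0"
    and grow: "\<forall>\<^sub>F s in at_right 0. k * s powr \<gamma> \<le> f (x + s *\<^sub>R v) - f x"
  shows "frechet_superdiff f x = {}"
proof (rule equals0I)
  fix p assume p: "p \<in> frechet_superdiff f x"
  define q where "q = max (p \<bullet> v + norm v) 1"
  have q: "q > 0" by (simp add: q_def)
  have "((\<lambda>s::real. s powr (1 - \<gamma>)) \<longlongrightarrow> 0) (at_right 0)"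
    using \<open>\<gamma> < 1\<close> eventually_at_right_less[of 0]
    by (intro tendsto_zero_powrI[of _ _ _ "1 - \<gamma>"] tendsto_ident_at) (auto elim: eventually_mono)
  then have small: "\<forall>\<^sub>F s in at_right 0. s powr (1 - \<gamma>) < k / q"
    using k q by (intro order_tendstoD) auto
  have "\<forall>\<^sub>F s in at_right 0.
          ereal 1 \<le> ereal ((f (x + s *\<^sub>R v) - f x - p \<bullet> (s *\<^sub>R v)) / norm (s *\<^sub>R v))"
    using grow small eventually_at_right_less[of 0]
  proof eventually_elim
    case (elim s)
    have "(p \<bullet> v + norm v) * s \<le> q * s"
      using elim(3) by (intro mult_right_mono) (auto simp: q_def)
    also have "\<dots> = q * s powr (1 - \<gamma>) * s powr \<gamma>"
      using elim(3) by (simp add: powr_add[symmetric])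
    also have "\<dots> \<le> k * s powr \<gamma>"
      using elim(2) q by (intro mult_right_mono) (auto simp: field_simps)
    also have "\<dots> \<le> f (x + s *\<^sub>R v) - f x"
      using elim(1) .
    finally have "(p \<bullet> v + norm v) * s \<le> f (x + s *\<^sub>R v) - f x" .
    then have "s * norm v \<le> f (x + s *\<^sub>R v) - f x - p \<bullet> (s *\<^sub>R v)"
      by (simp add: algebra_simps)
    then show ?case
      using elim(3) v by (simp add: pos_le_divide_eq)
  qed
  then have "ereal 1 \<le> Limsup (at_right (0::real))
               (\<lambda>s. ereal ((f (x + s *\<^sub>R v) - f x - p \<bullet> (s *\<^sub>R v)) / norm (s *\<^sub>R v)))"
    by (intro le_Limsup) auto
  also note frechet_superdiff_Limsup_ray[OF p v]
  finally show False by simp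
qed

lemma has_real_derivative_ray_quotient:
  assumes "(h has_real_derivative D) (at r)" and "c \<noteq> 0"
  shows "((\<lambda>s. (h (r + s * c) - h r) / s) \<longlongrightarrow> D * c) (at_right 0)"
proof -
  have ray: "filterlim (\<lambda>s::real. s * c) (at 0) (at_right 0)"
  proof (rule filterlim_atI)
    show "((\<lambda>s::real. s * c) \<longlongrightarrow> 0) (at_right 0)"
      by (intro tendsto_mult_left_zero tendsto_ident_at)
    show "\<forall>\<^sub>F s in at_right 0. s * c \<noteq> 0"
      using eventually_at_right_less[of 0] by eventually_elim (use assms(2) in simp)
  qed
  have "((\<lambda>y. (h (r + y) - h r) / y) \<longlongrightarrow> D) (at 0)"
    using assms(1) by (simp only: DERIV_def)
  from filterlim_compose[OF this ray]
  have "((\<lambda>s. (h (r + s * c) - h r) / (s * c) * c) \<longlongrightarrow> D * c) (at_right 0)"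
    by (intro tendsto_mult tendsto_const)
  moreover have "\<forall>\<^sub>F s in at_right 0. (h (r + s * c) - h r) / (s * c) * c = (h (r + s * c) - h r) / s"
    using eventually_at_right_less[of 0] by eventually_elim (use assms(2) in simp)
  ultimately show ?thesis by (rule Lim_transform_eventually)
qed

lemma frechet_superdiff_fst_le_partial:
  assumes p: "(p1, p2) \<in> frechet_superdiff (\<lambda>(s, r). g s r) (t, \<rho>)"
    and D: "((\<lambda>s. g s \<rho>) has_real_derivative D) (at t)"
  shows "p1 \<le> D"
proof -
  have "((\<lambda>s. ((\<lambda>(s, r). g s r) ((t, \<rho>) + s *\<^sub>R (-1, 0)) - (\<lambda>(s, r). g s r) (t, \<rho>)) / s)
          \<longlongrightarrow> - D) (at_right 0)"
    using has_real_derivative_ray_quotient[OF D, of "-1"] by (simp add: algebra_simps)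
  from frechet_superdiff_directional_le[OF p _ this] show ?thesis
    by (simp add: zero_prod_def)
qed

lemma frechet_superdiff_snd_le_left_quotient:
  assumes p: "(p1, p2) \<in> frechet_superdiff (\<lambda>(s, r). g s r) (t, \<rho>)"
    and D: "((\<lambda>s. (g t \<rho> - g t (\<rho> - s)) / s) \<longlongrightarrow> D) (at_right 0)"
  shows "p2 \<le> D"
proof -
  have "((\<lambda>s. ((\<lambda>(s, r). g s r) ((t, \<rho>) + s *\<^sub>R (0, -1)) - (\<lambda>(s, r). g s r) (t, \<rho>)) / s)
          \<longlongrightarrow> - D) (at_right 0)"
    using tendsto_minus[OF D] by (simp add: algebra_simps minus_divide_left)
  from frechet_superdiff_directional_le[OF p _ this] show ?thesis
    by (simp add: zero_prod_def)
qed

lemma frechet_superdiff_snd_le_partial: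
  assumes p: "(p1, p2) \<in> frechet_superdiff (\<lambda>(s, r). g s r) (t, \<rho>)"
    and D: "((\<lambda>r. g t r) has_real_derivative D) (at \<rho>)"
  shows "p2 \<le> D"
proof (rule frechet_superdiff_snd_le_left_quotient[OF p])
  from tendsto_minus[OF has_real_derivative_ray_quotient[OF D, of "-1"]]
  show "((\<lambda>s. (g t \<rho> - g t (\<rho> - s)) / s) \<longlongrightarrow> D) (at_right 0)"
    by (simp add: algebra_simps minus_divide_left)
qed

lemma has_real_derivative_if_locally_const:
  "\<forall>\<^sub>F y in nhds x. f y = f x \<Longrightarrow> (f has_real_derivative 0) (at x)"
  using DERIV_cong_ev[OF refl _ refl, of f "\<lambda>_. f x" x 0] by simp

locale mass_barrier =
  fixes \<alpha> M c0 T :: real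
  assumes \<alpha>_gt_1: "\<alpha> > 1" and M_pos: "M > 0"
begin

definition \<beta> :: real where "\<beta> = \<alpha> / (\<alpha> - 1)"
definition \<gamma> :: real where "\<gamma> = (\<alpha> - 1) / \<alpha>"
definition \<nu> :: real where "\<nu> = 1 / (\<alpha> - 1)"
definition c :: real where "c = \<alpha> powr (- 1 / (\<alpha> - 1))"

definition width :: "real \<Rightarrow> real" where
  "width t = \<alpha> powr (1 / \<alpha>) * M * (T - t) powr (1 / \<alpha>)"

definition deficit :: "real \<Rightarrow> real \<Rightarrow> real" where
  "deficit t w = c * w powr \<beta> / (T - t) powr \<nu>"

abbreviation m :: "real \<Rightarrow> real \<Rightarrow> real" where
  "m \<equiv> mlow \<alpha> M c0 T"

lemma mlow_eq:
  "m t \<rho> = (if \<rho> < c0 - width t then 0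
            else if \<rho> < c0 then (M powr \<beta> - deficit t (c0 - \<rho>)) powr \<gamma> else M)"
  by (simp add: mlow_def width_def deficit_def \<beta>_def \<gamma>_def \<nu>_def c_def Let_def)

lemma exponents:
  "\<nu> > 0" "\<beta> > 1" "\<gamma> > 0" "\<gamma> < 1" "c > 0"
  "\<beta> - 1 = \<nu>" "\<gamma> * \<beta> = 1"
  using \<alpha>_gt_1 by (auto simp: \<nu>_def \<beta>_def \<gamma>_def c_def field_simps)

lemma M_powr_\<beta>_powr_\<gamma>: "(M powr \<beta>) powr \<gamma> = M"
  using exponents(7) M_pos by (simp add: powr_powr mult.commute)

lemma width_pos: "t < T \<Longrightarrow> width t > 0"
  using \<alpha>_gt_1 M_pos by (simp add: width_def)

lemma width_tendsto: "t < T \<Longrightarrow> (width \<longlongrightarrow> width t) (nhds t)"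
  unfolding width_def
  by (rule tendsto_at_iff_tendsto_nhds[THEN iffD1]) (use \<alpha>_gt_1 in \<open>auto intro!: tendsto_intros\<close>)

lemma deficit_nonneg: "t < T \<Longrightarrow> deficit t w \<ge> 0"
  using exponents(5) by (simp add: deficit_def)

lemma deficit_width:
  assumes "t < T"
  shows "deficit t (width t) = M powr \<beta>"
proof -
  have \<tau>: "T - t > 0" using assms by simp
  have "width t powr \<beta> = (\<alpha> powr (1 / \<alpha>)) powr \<beta> * M powr \<beta> * ((T - t) powr (1 / \<alpha>)) powr \<beta>"
    unfolding width_def using \<alpha>_gt_1 M_pos \<tau> by (simp add: powr_mult)
  also have "\<dots> = \<alpha> powr \<nu> * M powr \<beta> * (T - t) powr \<nu>"
    using \<alpha>_gt_1 by (simp add: powr_powr \<beta>_def \<nu>_def)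
  finally have "width t powr \<beta> = \<alpha> powr \<nu> * M powr \<beta> * (T - t) powr \<nu>" .
  moreover have "c * \<alpha> powr \<nu> = 1"
    using \<alpha>_gt_1 by (simp add: c_def \<nu>_def powr_add[symmetric])
  ultimately show ?thesis
    using \<tau> by (simp add: deficit_def field_simps)
qed

lemma deficit_strict_mono: "t < T \<Longrightarrow> strict_mono_on {0..} (deficit t)"
  using exponents(2,5)
  by (intro strict_mono_onI) (auto simp: deficit_def divide_strict_right_mono powr_less_mono2)

lemma deficit_less_M_iff: "t < T \<Longrightarrow> 0 \<le> w \<Longrightarrow> deficit t w < M powr \<beta> \<longleftrightarrow> w < width t"
  using strict_mono_on_less[OF deficit_strict_mono, of t w "width t"] width_pos[of t]
  by (simp add: deficit_width)

lemma deficit_le_M_iff: "t < T \<Longrightarrow> 0 \<le> w \<Longrightarrow> deficit t w \<le> M powr \<beta> \<longleftrightarrow> w \<le> width t"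
  using strict_mono_on_less_eq[OF deficit_strict_mono, of t w "width t"] width_pos[of t]
  by (simp add: deficit_width)

lemma mlow_eq_truncated:
  assumes "t < T"
  shows "m t \<rho> = (max (M powr \<beta> - deficit t (max (c0 - \<rho>) 0)) 0) powr \<gamma>"
proof -
  consider "\<rho> < c0 - width t" | "c0 - width t \<le> \<rho>" "\<rho> < c0" | "c0 \<le> \<rho>" by linarith
  then show ?thesis
  proof cases
    case 1
    then show ?thesis
      using deficit_le_M_iff[OF assms, of "c0 - \<rho>"] width_pos[OF assms] by (simp add: mlow_eq)
  next
    case 2
    then show ?thesis
      using deficit_le_M_iff[OF assms, of "c0 - \<rho>"] by (simp add: mlow_eq)
  next
    case 3
    then show ?thesis
      using width_pos[OF assms] exponents(2) M_powr_\<beta>_powr_\<gamma> by (simp add: mlow_eq deficit_def)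
  qed
qed

lemma continuous_mlow: "continuous_on ({0..<T} \<times> {0..}) (\<lambda>(t, \<rho>). m t \<rho>)"
proof -
  let ?D = "\<lambda>x::real \<times> real. deficit (fst x) (max (c0 - snd x) 0)"
  have "continuous_on ({0..<T} \<times> {0..}) ?D"
    unfolding deficit_def using exponents(1,2)
    by (intro continuous_on_powr' continuous_intros) auto
  then have "continuous_on ({0..<T} \<times> {0..}) (\<lambda>x. (max (M powr \<beta> - ?D x) 0) powr \<gamma>)"
    using exponents(3) by (intro continuous_on_powr' continuous_intros) auto
  then show ?thesis
    by (rule continuous_on_cong[THEN iffD1, rotated 2]) (auto simp: mlow_eq_truncated)
qed

lemma mlow_time_derivative_outside:
  assumes t: "t < T" and \<rho>: "\<rho> < c0 - width t \<or> c0 \<le> \<rho>"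
  shows "((\<lambda>s. m s \<rho>) has_real_derivative 0) (at t)"
proof (rule has_real_derivative_if_locally_const)
  have before_T: "\<forall>\<^sub>F s in nhds t. s < T"
    using eventually_nhds_in_open[of "{..<T}" t] t by simp
  show "\<forall>\<^sub>F s in nhds t. m s \<rho> = m t \<rho>"
  proof (cases "c0 \<le> \<rho>")
    case True
    from before_T show ?thesis
    proof eventually_elim
      case (elim s)
      then show ?case
        using True width_pos[OF elim] width_pos[OF t] by (simp add: mlow_eq)
    qed
  next
    case False
    from False \<rho> have "\<forall>\<^sub>F s in nhds t. width s < c0 - \<rho>"
      by (intro order_tendstoD(2)[OF width_tendsto[OF t]]) simp
    then show ?thesis
      by eventually_elim (use False \<rho> in \<open>simp add: mlow_eq\<close>)
  qed
qed

lemma mlow_left_quotient_at_c0: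
  assumes t: "t < T" and s: "0 < s" "s < width t"
  shows "0 \<le> (m t c0 - m t (c0 - s)) / s"
    and "(m t c0 - m t (c0 - s)) / s \<le> M * c / (M powr \<beta> * (T - t) powr \<nu>) * s powr \<nu>"
proof -
  define u where "u = M powr \<beta> - deficit t s"
  have m_c0: "m t c0 = M"
    using width_pos[OF t] by (simp add: mlow_eq)
  have m_s: "m t (c0 - s) = u powr \<gamma>"
    using s by (simp add: mlow_eq u_def)
  have u: "0 \<le> u" "u \<le> M powr \<beta>"
    using deficit_le_M_iff[OF t, of s] deficit_nonneg[OF t, of s] s by (auto simp: u_def)
  have "u powr \<gamma> \<le> M"
    using powr_mono2[of \<gamma> u "M powr \<beta>"] exponents(3) u M_powr_\<beta>_powr_\<gamma> by simp
  then show "0 \<le> (m t c0 - m t (c0 - s)) / s"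
    using m_c0 m_s s by simp
  have "u / M powr \<beta> \<le> 1"
    using u M_pos by simp
  then have "u / M powr \<beta> \<le> (u / M powr \<beta>) powr \<gamma>"
    using powr_mono'[of \<gamma> 1 "u / M powr \<beta>"] exponents(4) u by simp
  also have "\<dots> = u powr \<gamma> / M"
    by (simp add: powr_divide M_powr_\<beta>_powr_\<gamma>)
  finally have "M - u powr \<gamma> \<le> M * (deficit t s / M powr \<beta>)"
    using M_pos by (simp add: u_def field_simps)
  moreover have "s powr \<beta> = s powr \<nu> * s"
    using s exponents(6) powr_add[of s \<nu> 1] by (simp add: diff_eq_eq)
  ultimately have "M - u powr \<gamma> \<le> M * c / (M powr \<beta> * (T - t) powr \<nu>) * s powr \<nu> * s"
    by (simp add: deficit_def mult_ac)
  then show "(m t c0 - m t (c0 - s)) / s \<le> M * c / (M powr \<beta> * (T - t) powr \<nu>) * s powr \<nu>"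
    using m_c0 m_s s by (simp add: divide_le_eq)
qed

lemma superdiff_snd_nonpos_from_c0:
  assumes t: "t < T" and p: "(p1, p2) \<in> frechet_superdiff (\<lambda>(s, r). m s r) (t, \<rho>)"
    and \<rho>: "c0 \<le> \<rho>"
  shows "p2 \<le> 0"
proof (cases "\<rho> = c0")
  case True
  let ?C = "M * c / (M powr \<beta> * (T - t) powr \<nu>)"
  have near: "\<forall>\<^sub>F s in at_right 0. 0 < s \<and> s < width t"
    using width_pos[OF t] by (auto simp: eventually_at_right_field)
  have lower: "\<forall>\<^sub>F s in at_right 0. 0 \<le> (m t \<rho> - m t (\<rho> - s)) / s"
    using near by eventually_elim (use True mlow_left_quotient_at_c0(1)[OF t] in simp)
  have upper: "\<forall>\<^sub>F s in at_right 0. (m t \<rho> - m t (\<rho> - s)) / s \<le> ?C * s powr \<nu>"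
    using near by eventually_elim (use True mlow_left_quotient_at_c0(2)[OF t] in simp)
  have "((\<lambda>s::real. s powr \<nu>) \<longlongrightarrow> 0) (at_right 0)"
    using exponents(1) eventually_at_right_less[of 0]
    by (intro tendsto_zero_powrI[of _ _ _ \<nu>] tendsto_ident_at) (auto elim: eventually_mono)
  then have "((\<lambda>s. ?C * s powr \<nu>) \<longlongrightarrow> 0) (at_right 0)"
    by (rule tendsto_mult_right_zero)
  then have "((\<lambda>s. (m t \<rho> - m t (\<rho> - s)) / s) \<longlongrightarrow> 0) (at_right 0)"
    by (rule tendsto_sandwich[OF lower upper tendsto_const])
  then show ?thesis
    by (rule frechet_superdiff_snd_le_left_quotient[OF p])
next
  case False
  with \<rho> have "\<forall>\<^sub>F r in nhds \<rho>. c0 < r"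
    using eventually_nhds_in_open[of "{c0<..}" \<rho>] by simp
  then have "\<forall>\<^sub>F r in nhds \<rho>. m t r = m t \<rho>"
    by eventually_elim (use \<rho> width_pos[OF t] in \<open>simp add: mlow_eq\<close>)
  then show ?thesis
    by (rule frechet_superdiff_snd_le_partial[OF p has_real_derivative_if_locally_const])
qed

lemma superdiff_empty_at_front:
  assumes t: "t < T" and \<rho>: "\<rho> = c0 - width t"
  shows "frechet_superdiff (\<lambda>(s, r). m s r) (t, \<rho>) = {}"
proof -
  define A where "A = width t"
  define k where "k = c * A powr \<nu> / (T - t) powr \<nu>"
  have A: "A > 0"
    using width_pos[OF t] by (simp add: A_def)
  have k: "k > 0"
    using A t exponents(5) by (simp add: k_def)
  have split_power: "x powr \<beta> = x powr \<nu> * x" if "x > 0" for x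
    using that exponents(6) powr_add[of x \<nu> 1] by (simp add: diff_eq_eq)
  have kA: "k * A = M powr \<beta>"
    using deficit_width[OF t] split_power[OF A] by (simp add: deficit_def k_def A_def mult_ac)
  have m_front: "m t \<rho> = 0"
    using \<rho> A deficit_width[OF t] by (simp add: mlow_eq A_def)
  have growth: "(k * s) powr \<gamma> \<le> m t (\<rho> + s) - m t \<rho>" if s: "0 < s" "s < A" for s
  proof -
    have m_s: "m t (\<rho> + s) = (M powr \<beta> - deficit t (A - s)) powr \<gamma>"
      using \<rho> s by (simp add: mlow_eq A_def)
    have "(A - s) powr \<beta> = (A - s) powr \<nu> * (A - s)"
      using s by (intro split_power) simp
    also have "\<dots> \<le> A powr \<nu> * (A - s)"
      using s exponents(1) by (intro mult_right_mono powr_mono2) auto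
    finally have "deficit t (A - s) \<le> c * (A powr \<nu> * (A - s)) / (T - t) powr \<nu>"
      unfolding deficit_def using t exponents(5) by (intro divide_right_mono mult_left_mono) auto
    also have "\<dots> = k * A - k * s"
      using t by (simp add: k_def field_simps)
    finally have "k * s \<le> M powr \<beta> - deficit t (A - s)"
      using kA by simp
    then show ?thesis
      using m_s m_front k s exponents(3) by (simp add: powr_mono2)
  qed
  show ?thesis
  proof (rule frechet_superdiff_empty_if_root_growth[of "(0, 1)" \<gamma> "k powr \<gamma>"])
    have "\<forall>\<^sub>F s in at_right 0. 0 < s \<and> s < A"
      using A by (auto simp: eventually_at_right_field)
    then show "\<forall>\<^sub>F s in at_right 0. k powr \<gamma> * s powr \<gamma> \<le>
        (\<lambda>(s, r). m s r) ((t, \<rho>) + s *\<^sub>R (0, 1)) - (\<lambda>(s, r). m s r) (t, \<rho>)"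
      by eventually_elim (use growth k in \<open>simp add: powr_mult\<close>)
  qed (use k exponents(4) in \<open>auto simp: zero_prod_def\<close>)
qed

text \<open>The two summands are \<open>m_t\<close> and \<open>(m_\<rho>)^\<alpha> m\<close> for \<open>m = u^\<gamma>\<close>,
  \<open>u = M^\<beta> - c w^\<beta> / \<tau>^\<nu>\<close>, \<open>w = c0 - \<rho>\<close>, \<open>\<tau> = T - t\<close>, in the form the chain rule produces them.\<close>
lemma mass_equation_identity:
  assumes u: "u > 0" and w: "w > 0" and \<tau>: "\<tau> > 0"
  shows "\<gamma> * u powr (\<gamma> - 1) * (- (c * w powr \<beta> * (\<nu> * \<tau> powr (\<nu> - 1)) / (\<tau> powr \<nu>)\<^sup>2))
       + (\<gamma> * u powr (\<gamma> - 1) * (c * (\<beta> * w powr (\<beta> - 1)) / \<tau> powr \<nu>)) powr \<alpha> * u powr \<gamma> = 0"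
proof -
  define a where "a = ln \<alpha>"
  define E where "E = (\<gamma> - 1) * ln u - a - \<nu> * a + (\<nu> + 1) * ln w - (\<nu> + 1) * ln \<tau>"
  have \<gamma>\<beta>: "\<gamma> * \<beta> = 1" and \<beta>: "\<beta> = \<nu> + 1"
    using exponents(6,7) by simp_all
  have \<gamma>\<nu>: "\<gamma> * \<nu> = exp (- a)"
    using \<alpha>_gt_1 by (simp add: \<gamma>_def \<nu>_def a_def exp_minus inverse_eq_divide)
  have c: "c = exp (- \<nu> * a)"
    using \<alpha>_gt_1 by (simp add: c_def \<nu>_def a_def powr_def)
  have \<alpha>\<nu>: "\<alpha> * \<nu> = \<nu> + 1" and \<alpha>\<gamma>: "\<alpha> * (\<gamma> - 1) = - 1"
    using \<alpha>_gt_1 by (simp_all add: \<nu>_def \<gamma>_def field_simps)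
  have slope: "\<gamma> * u powr (\<gamma> - 1) * (c * (\<beta> * w powr (\<beta> - 1)) / \<tau> powr \<nu>)
      = exp ((\<gamma> - 1) * ln u - \<nu> * a + \<nu> * ln w - \<nu> * ln \<tau>)"
  proof -
    have "\<gamma> * u powr (\<gamma> - 1) * (c * (\<beta> * w powr (\<beta> - 1)) / \<tau> powr \<nu>)
        = (\<gamma> * \<beta>) * u powr (\<gamma> - 1) * c * w powr (\<beta> - 1) / \<tau> powr \<nu>"
      by simp
    also have "\<dots> = exp ((\<gamma> - 1) * ln u) * exp (- \<nu> * a) * exp (\<nu> * ln w) / exp (\<nu> * ln \<tau>)"
      using u w \<tau> exponents(6) by (simp add: \<gamma>\<beta> c powr_def)
    finally show ?thesis
      by (simp add: exp_add exp_diff exp_minus field_simps)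
  qed
  have time_slope: "\<gamma> * u powr (\<gamma> - 1) * (- (c * w powr \<beta> * (\<nu> * \<tau> powr (\<nu> - 1)) / (\<tau> powr \<nu>)\<^sup>2))
      = - exp E"
  proof -
    have "\<gamma> * u powr (\<gamma> - 1) * (- (c * w powr \<beta> * (\<nu> * \<tau> powr (\<nu> - 1)) / (\<tau> powr \<nu>)\<^sup>2))
        = - ((\<gamma> * \<nu>) * u powr (\<gamma> - 1) * c * w powr \<beta> * \<tau> powr (\<nu> - 1) / (\<tau> powr \<nu>)\<^sup>2)"
      by simp
    also have "\<dots> = - (exp (- a) * exp ((\<gamma> - 1) * ln u) * exp (- \<nu> * a) * exp ((\<nu> + 1) * ln w)
                       * exp ((\<nu> - 1) * ln \<tau>) / (exp (\<nu> * ln \<tau>))\<^sup>2)"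
      using u w \<tau> by (simp add: \<gamma>\<nu> c \<beta> powr_def)
    finally show ?thesis
      by (simp add: E_def exp_add[symmetric] exp_diff[symmetric] power2_eq_square algebra_simps)
  qed
  have "exp ((\<gamma> - 1) * ln u - \<nu> * a + \<nu> * ln w - \<nu> * ln \<tau>) powr \<alpha> * u powr \<gamma>
      = exp (\<alpha> * ((\<gamma> - 1) * ln u - \<nu> * a + \<nu> * ln w - \<nu> * ln \<tau>) + \<gamma> * ln u)"
    using u by (simp add: powr_def mult_exp_exp algebra_simps)
  also have "\<alpha> * ((\<gamma> - 1) * ln u - \<nu> * a + \<nu> * ln w - \<nu> * ln \<tau>) + \<gamma> * ln u
      = (\<alpha> * (\<gamma> - 1)) * ln u - (\<alpha> * \<nu>) * a + (\<alpha> * \<nu>) * ln w - (\<alpha> * \<nu>) * ln \<tau> + \<gamma> * ln u"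
    by (simp add: algebra_simps)
  also have "\<dots> = E"
    unfolding \<alpha>\<gamma> \<alpha>\<nu> E_def by (simp add: algebra_simps)
  finally show ?thesis
    unfolding slope time_slope by simp
qed

lemma mlow_space_derivative_in_transition:
  assumes t: "t < T" and inside: "c0 - width t < \<rho>" "\<rho> < c0"
  shows "((\<lambda>r. m t r) has_real_derivative
           \<gamma> * (M powr \<beta> - deficit t (c0 - \<rho>)) powr (\<gamma> - 1)
             * (c * (\<beta> * (c0 - \<rho>) powr (\<beta> - 1)) / (T - t) powr \<nu>)) (at \<rho>)"
proof -
  have near: "\<forall>\<^sub>F r in nhds \<rho>. m t r = (M powr \<beta> - deficit t (c0 - r)) powr \<gamma>"
    using eventually_nhds_in_open[of "{c0 - width t<..<c0}" \<rho>] inside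
    by (auto elim!: eventually_mono simp: mlow_eq)
  have "((\<lambda>r. (c0 - r) powr \<beta>) has_real_derivative \<beta> * (c0 - \<rho>) powr (\<beta> - 1) * (-1)) (at \<rho>)"
    using DERIV_fun_powr[OF DERIV_diff[OF DERIV_const DERIV_ident], of c0 \<rho> \<beta>] inside by simp
  then have "((\<lambda>r. M powr \<beta> - deficit t (c0 - r)) has_real_derivative
      0 - c * (\<beta> * (c0 - \<rho>) powr (\<beta> - 1) * (-1)) / (T - t) powr \<nu>) (at \<rho>)"
    unfolding deficit_def by (intro DERIV_diff DERIV_const DERIV_cdivide DERIV_cmult)
  from DERIV_fun_powr[OF this, of \<gamma>]
  have "((\<lambda>r. (M powr \<beta> - deficit t (c0 - r)) powr \<gamma>) has_real_derivative
          \<gamma> * (M powr \<beta> - deficit t (c0 - \<rho>)) powr (\<gamma> - 1)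
            * (c * (\<beta> * (c0 - \<rho>) powr (\<beta> - 1)) / (T - t) powr \<nu>)) (at \<rho>)"
    using deficit_less_M_iff[OF t, of "c0 - \<rho>"] inside by simp
  with DERIV_cong_ev[OF refl near refl] show ?thesis
    by blast
qed

lemma mlow_time_derivative_in_transition:
  assumes t: "t < T" and inside: "c0 - width t < \<rho>" "\<rho> < c0"
  shows "((\<lambda>s. m s \<rho>) has_real_derivative
           \<gamma> * (M powr \<beta> - deficit t (c0 - \<rho>)) powr (\<gamma> - 1)
             * (- (c * (c0 - \<rho>) powr \<beta> * (\<nu> * (T - t) powr (\<nu> - 1)) / ((T - t) powr \<nu>)\<^sup>2))) (at t)"
proof -
  from inside have "\<forall>\<^sub>F s in nhds t. c0 - \<rho> < width s"
    by (intro order_tendstoD(1)[OF width_tendsto[OF t]]) simp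
  then have near: "\<forall>\<^sub>F s in nhds t. m s \<rho> = (M powr \<beta> - deficit s (c0 - \<rho>)) powr \<gamma>"
    by eventually_elim (use inside in \<open>simp add: mlow_eq\<close>)
  have d\<tau>: "((\<lambda>s. (T - s) powr \<nu>) has_real_derivative \<nu> * (T - t) powr (\<nu> - 1) * (-1)) (at t)"
    using DERIV_fun_powr[OF DERIV_diff[OF DERIV_const DERIV_ident], of T t \<nu>] t by simp
  have "((\<lambda>s. M powr \<beta> - deficit s (c0 - \<rho>)) has_real_derivative
      0 - (0 * (T - t) powr \<nu> - c * (c0 - \<rho>) powr \<beta> * (\<nu> * (T - t) powr (\<nu> - 1) * (-1)))
        / ((T - t) powr \<nu> * (T - t) powr \<nu>)) (at t)"
    unfolding deficit_def using t by (intro DERIV_diff DERIV_const DERIV_divide d\<tau>) auto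
  from DERIV_fun_powr[OF this, of \<gamma>]
  have "((\<lambda>s. (M powr \<beta> - deficit s (c0 - \<rho>)) powr \<gamma>) has_real_derivative
          \<gamma> * (M powr \<beta> - deficit t (c0 - \<rho>)) powr (\<gamma> - 1)
            * (- (c * (c0 - \<rho>) powr \<beta> * (\<nu> * (T - t) powr (\<nu> - 1)) / ((T - t) powr \<nu>)\<^sup>2))) (at t)"
    using deficit_less_M_iff[OF t, of "c0 - \<rho>"] inside by (simp add: power2_eq_square)
  with DERIV_cong_ev[OF refl near refl] show ?thesis
    by blast
qed

lemma subsolution_in_transition:
  assumes t: "t < T" and p: "(p1, p2) \<in> frechet_superdiff (\<lambda>(s, r). m s r) (t, \<rho>)"
    and inside: "c0 - width t < \<rho>" "\<rho> < c0"
  shows "p1 + (max p2 0) powr \<alpha> * m t \<rho> \<le> 0"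
proof -
  define \<tau> w u where "\<tau> = T - t" and "w = c0 - \<rho>" and "u = M powr \<beta> - deficit t (c0 - \<rho>)"
  have \<tau>: "\<tau> > 0" and w: "w > 0"
    using t inside by (simp_all add: \<tau>_def w_def)
  have u: "u > 0"
    using deficit_less_M_iff[OF t, of w] w inside by (simp add: u_def w_def)
  define D\<rho> where "D\<rho> = \<gamma> * u powr (\<gamma> - 1) * (c * (\<beta> * w powr (\<beta> - 1)) / \<tau> powr \<nu>)"
  define Dt where
    "Dt = \<gamma> * u powr (\<gamma> - 1) * (- (c * w powr \<beta> * (\<nu> * \<tau> powr (\<nu> - 1)) / (\<tau> powr \<nu>)\<^sup>2))"
  have p1: "p1 \<le> Dt"
    using frechet_superdiff_fst_le_partial[OF p mlow_time_derivative_in_transition[OF t inside]]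
    by (simp add: Dt_def u_def w_def \<tau>_def)
  have p2: "p2 \<le> D\<rho>"
    using frechet_superdiff_snd_le_partial[OF p mlow_space_derivative_in_transition[OF t inside]]
    by (simp add: D\<rho>_def u_def w_def \<tau>_def)
  have "D\<rho> > 0"
    using exponents u w \<tau> by (simp add: D\<rho>_def)
  with p2 have "(max p2 0) powr \<alpha> * u powr \<gamma> \<le> D\<rho> powr \<alpha> * u powr \<gamma>"
    using \<alpha>_gt_1 by (intro mult_right_mono powr_mono2) auto
  moreover have "Dt + D\<rho> powr \<alpha> * u powr \<gamma> = 0"
    unfolding Dt_def D\<rho>_def by (rule mass_equation_identity[OF u w \<tau>])
  moreover have "m t \<rho> = u powr \<gamma>"
    using inside by (simp add: mlow_eq u_def)
  ultimately show ?thesis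
    using p1 by simp
qed

lemma subsolution:
  assumes t: "t < T" and p: "(p1, p2) \<in> frechet_superdiff (\<lambda>(s, r). m s r) (t, \<rho>)"
  shows "p1 + (max p2 0) powr \<alpha> * m t \<rho> \<le> 0"
proof -
  consider "\<rho> < c0 - width t" | "\<rho> = c0 - width t" | "c0 - width t < \<rho>" "\<rho> < c0" | "c0 \<le> \<rho>"
    by linarith
  then show ?thesis
  proof cases
    case 1
    then show ?thesis
      using frechet_superdiff_fst_le_partial[OF p mlow_time_derivative_outside[OF t]]
      by (simp add: mlow_eq)
  next
    case 2
    then show ?thesis
      using superdiff_empty_at_front[OF t] p by simp
  next
    case 3
    then show ?thesis
      by (rule subsolution_in_transition[OF t p])
  next
    case 4
    then show ?thesis
      using frechet_superdiff_fst_le_partial[OF p mlow_time_derivative_outside[OF t]]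
        superdiff_snd_nonpos_from_c0[OF t p] \<alpha>_gt_1
      by simp
  qed
qed

end

theorem mainTheorem7:
  fixes \<alpha> M c0 T :: real
  assumes "\<alpha> > 1" and "M > 0" and "c0 > 0" and "T > 0"
  shows "continuous_on ({0..<T} \<times> {0..}) (\<lambda>(t, \<rho>). mlow \<alpha> M c0 T t \<rho>)
         \<and> (\<forall>t \<rho> p1 p2. 0 < t \<and> t < T \<and> 0 < \<rho> \<and>
              (p1, p2) \<in> frechet_superdiff (\<lambda>(s, r). mlow \<alpha> M c0 T s r) (t, \<rho>) \<longrightarrow>
              p1 + (max p2 0) powr \<alpha> * mlow \<alpha> M c0 T t \<rho> \<le> 0)"
proof -
  interpret mass_barrier \<alpha> M c0 T
    using assms by unfold_locales
  show ?thesis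
    using continuous_mlow subsolution by blast
qed

end
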